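(* Under the setting described in the context, there is a constant $c>0$, depending only on $\psi$, $\mu$ and $d$, such that for all $0<h\le 1$, $$\left\|\left(\int_{\Omega}\psi_h(\cdot-t)\,d\mu(t)\right)^{-1}\right\|_{L^\infty(\Omega)}\le c,$$ equivalently $\int_\Omega \psi_h(x-t)\,d\mu(t)\ge 1/c$ for all $x\in\Omega$.
   Context: Let $d\ge 1$ and let $\Omega\subset\mathbb{R}^d$ be a compact convex domain with Lipschitz boundary. Let $\mu$ be a probability measure on $\Omega$ such that: (1) there is a constant $C_1>0$, depending only on $\mu$ and $d$, with $\mu(\Omega\cap B(x,\alpha))\ge C_1\, m(B(x,\alpha))$ for all $x\in\Omega$ and $0<\alpha\le 1$, where $B(x,\alpha)$ is the Euclidean ball of radius $\alpha$ centered at $x$ and $m$ is Lebesgue measure; (2) $\mu$ extends to a finite positive measure $\mu^*$ on $\mathbb{R}^d$ whose Fourier transform belongs to $L^1(\mathbb{R}^d)$. Let $\psi\in C(\mathbb{R}^d)$ be nonnegative with $\int_{\mathbb{R}^d}\psi=1$, $\int_{\mathbb{R}^d}|x|\psi(x)\,dx<\infty$, and $\psi(x)\ge C_\psi>0$ for all $|x|\le 1$. For $h>0$ set $\psi_h(x)=h^{-d}\psi(x/h)$. *)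

theory Defs
  imports "HOL-Probability.Probability"
begin

definition fourier_measure :: "'a::euclidean_space measure \<Rightarrow> 'a \<Rightarrow> complex" where
  "fourier_measure N \<xi> = (\<integral>x. cis (- (\<xi> \<bullet> x)) \<partial>N)"

definition scaled_kernel :: "('a::euclidean_space \<Rightarrow> real) \<Rightarrow> real \<Rightarrow> 'a \<Rightarrow> real" where
  "scaled_kernel \<psi> h x = \<psi> ((1 / h) *\<^sub>R x) / h ^ DIM('a)"

end

theory Submission
  imports Defs
begin

text \<open>On the ball \<open>B(x, h)\<close> the kernel \<open>\<psi>\<^sub>h(x - \<cdot>)\<close> is at least \<open>C\<^sub>\<psi> h\<^sup>-\<^sup>d\<close>, while \<open>\<mu>\<close> gives
  \<open>\<Omega> \<inter> B(x, h)\<close> mass at least \<open>C\<^sub>1 vol(B\<^sub>1) h\<^sup>d\<close>. The powers of \<open>h\<close> cancel, so the integral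
  is bounded below by \<open>C\<^sub>\<psi> C\<^sub>1 vol(B\<^sub>1)\<close> uniformly in \<open>h \<in> (0, 1]\<close>. Besides these two lower
  bounds only continuity of \<open>\<psi>\<close> and compactness of \<open>\<Omega>\<close> (for integrability) are used.\<close>

lemma set_integrable_continuous_on_compact:
  fixes f :: "'a::t2_space \<Rightarrow> 'b::{banach, second_countable_topology}"
  assumes "finite_measure M" and "sets M = sets borel" and "compact A" and "continuous_on A f"
  shows "set_integrable M A f"
proof -
  obtain B where B: "\<And>t. t \<in> A \<Longrightarrow> norm (f t) \<le> B"
    using compact_imp_bounded[OF compact_continuous_image[OF assms(4,3)]]
    by (auto simp: bounded_iff)
  have "A \<in> sets borel"
    by (intro borel_closed compact_imp_closed assms(3))
  then have "(\<lambda>t. indicator A t *\<^sub>R f t) \<in> borel_measurable M"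
    using borel_measurable_continuous_on_indicator[OF _ assms(4)] measurable_cong_sets[OF assms(2) refl]
    by blast
  moreover have "AE t in M. norm (indicator A t *\<^sub>R f t) \<le> max 0 B"
    using B by (intro AE_I2) (auto simp: indicator_def le_max_iff_disj)
  ultimately show ?thesis
    unfolding set_integrable_def by (intro finite_measure.integrable_const_bound[OF assms(1)])
qed

lemma (in finite_measure) measure_mult_le_set_integral:
  fixes f :: "'a \<Rightarrow> real"
  assumes f: "set_integrable M A f" and S: "S \<in> sets M" "S \<subseteq> A"
    and nonneg: "\<And>t. t \<in> A \<Longrightarrow> 0 \<le> f t" and lower: "\<And>t. t \<in> S \<Longrightarrow> K \<le> f t"
  shows "K * measure M S \<le> (LINT t:A|M. f t)"
proof -
  have restrict: "indicator A t * (indicator S t * K) = indicator S t * K" for t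
    using S(2) by (auto simp: indicator_def)
  have "K * measure M S = (\<integral>t. indicator S t * K \<partial>M)"
    using S(1) by simp
  also have "\<dots> = (LINT t:A|M. indicator S t * K)"
    unfolding set_lebesgue_integral_def real_scaleR_def restrict ..
  also have "\<dots> \<le> (LINT t:A|M. f t)"
  proof (rule set_integral_mono[OF _ f])
    show "set_integrable M A (\<lambda>t. indicator S t * K)"
      using S(1) unfolding set_integrable_def real_scaleR_def restrict
      by (auto intro!: integrable_real_indicator simp: less_top[symmetric])
    show "indicator S t * K \<le> f t" if "t \<in> A" for t
      using that nonneg lower by (simp add: indicator_def)
  qed
  finally show ?thesis .
qed

lemma scaled_kernel_nonneg:
  assumes "\<And>y. 0 \<le> \<psi> y" and "0 < h"
  shows "0 \<le> scaled_kernel \<psi> h x"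
  using assms by (simp add: scaled_kernel_def)

lemma scaled_kernel_ge_in_ball:
  fixes \<psi> :: "'a::euclidean_space \<Rightarrow> real"
  assumes lower: "\<And>y. norm y \<le> 1 \<Longrightarrow> C \<le> \<psi> y" and "0 < h" and "norm x \<le> h"
  shows "C / h ^ DIM('a) \<le> scaled_kernel \<psi> h x"
proof -
  have "norm ((1 / h) *\<^sub>R x) \<le> 1"
    using assms(2,3) by (simp add: field_simps)
  then show ?thesis
    using lower assms(2) by (simp add: scaled_kernel_def divide_right_mono)
qed

lemma continuous_on_scaled_kernel_translate:
  assumes "continuous_on UNIV \<psi>"
  shows "continuous_on A (\<lambda>t. scaled_kernel \<psi> h (x - t))"
  unfolding scaled_kernel_def divide_inverse
  by (intro continuous_intros continuous_on_compose2[OF assms]) auto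

theorem lemma2p2:
  fixes \<Omega> :: "'a::euclidean_space set"
    and M N :: "'a measure"
    and \<psi> :: "'a \<Rightarrow> real"
    and C\<^sub>1 C\<^sub>\<psi> :: real
  assumes \<Omega>_compact: "compact \<Omega>"
    and \<Omega>_convex: "convex \<Omega>"
    and \<Omega>_domain: "interior \<Omega> \<noteq> {}"
    and M_sets: "sets M = sets borel"
    and M_prob: "prob_space M"
    and M_on_\<Omega>: "emeasure M (UNIV - \<Omega>) = 0"
    and C1_pos: "C\<^sub>1 > 0"
    and M_lower: "\<And>x \<alpha>. x \<in> \<Omega> \<Longrightarrow> 0 < \<alpha> \<Longrightarrow> \<alpha> \<le> 1 \<Longrightarrow>
        measure M (\<Omega> \<inter> ball x \<alpha>) \<ge> C\<^sub>1 * measure lborel (ball x \<alpha>)"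
    and N_sets: "sets N = sets borel"
    and N_finite: "finite_measure N"
    and N_extends: "\<And>A. A \<in> sets borel \<Longrightarrow> A \<subseteq> \<Omega> \<Longrightarrow> emeasure N A = emeasure M A"
    and N_fourier: "integrable lborel (fourier_measure N)"
    and \<psi>_cont: "continuous_on UNIV \<psi>"
    and \<psi>_nonneg: "\<And>x. \<psi> x \<ge> 0"
    and \<psi>_int: "integrable lborel \<psi>"
    and \<psi>_int1: "(\<integral>x. \<psi> x \<partial>lborel) = 1"
    and \<psi>_moment: "integrable lborel (\<lambda>x. norm x * \<psi> x)"
    and C\<psi>_pos: "C\<^sub>\<psi> > 0"
    and \<psi>_lower: "\<And>x. norm x \<le> 1 \<Longrightarrow> \<psi> x \<ge> C\<^sub>\<psi>"
  shows "\<exists>c>0. \<forall>h. 0 < h \<and> h \<le> 1 \<longrightarrow>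
           (\<forall>x\<in>\<Omega>. (\<integral>t\<in>\<Omega>. scaled_kernel \<psi> h (x - t) \<partial>M) \<ge> 1 / c)"
proof -
  interpret prob_space M by (rule M_prob)
  define c where "c = 1 / (C\<^sub>\<psi> * C\<^sub>1 * unit_ball_vol DIM('a))"
  show ?thesis
  proof (intro exI[of _ c] conjI allI impI ballI)
    show "c > 0" using C1_pos C\<psi>_pos by (simp add: c_def)
    fix h :: real and x assume "0 < h \<and> h \<le> 1" and x: "x \<in> \<Omega>"
    then have h: "0 < h" "h \<le> 1" by auto
    have "1 / c = C\<^sub>\<psi> / h ^ DIM('a) * (C\<^sub>1 * measure lborel (ball x h))"
      using h by (simp add: c_def content_ball)
    also have "\<dots> \<le> C\<^sub>\<psi> / h ^ DIM('a) * measure M (\<Omega> \<inter> ball x h)"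
      using h C\<psi>_pos by (intro mult_left_mono M_lower[OF x h]) auto
    also have "\<dots> \<le> (\<integral>t\<in>\<Omega>. scaled_kernel \<psi> h (x - t) \<partial>M)"
    proof (rule measure_mult_le_set_integral)
      show "set_integrable M \<Omega> (\<lambda>t. scaled_kernel \<psi> h (x - t))"
        by (rule set_integrable_continuous_on_compact[OF finite_measure_axioms M_sets \<Omega>_compact
              continuous_on_scaled_kernel_translate[OF \<psi>_cont]])
      show "\<Omega> \<inter> ball x h \<in> sets M"
        using M_sets borel_closed[OF compact_imp_closed[OF \<Omega>_compact]] by simp
      show "\<Omega> \<inter> ball x h \<subseteq> \<Omega>"
        by (rule Int_lower1)
      show "0 \<le> scaled_kernel \<psi> h (x - t)" for t
        by (rule scaled_kernel_nonneg[OF \<psi>_nonneg h(1)])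
      show "C\<^sub>\<psi> / h ^ DIM('a) \<le> scaled_kernel \<psi> h (x - t)" if "t \<in> \<Omega> \<inter> ball x h" for t
      proof (rule scaled_kernel_ge_in_ball[OF \<psi>_lower h(1)])
        have "dist x t < h" using that by simp
        then show "norm (x - t) \<le> h" by (simp add: dist_norm)
      qed
    qed
    finally show "1 / c \<le> (\<integral>t\<in>\<Omega>. scaled_kernel \<psi> h (x - t) \<partial>M)" .
  qed
qed

end
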